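(* For $X_d=\otimes_{j=1}^d X_{1,j}$, the following are equivalent: (i) $\sup_{d\in\mathbb N}n^{X_d}(\varepsilon)<\infty$ for every $\varepsilon\in(0,1)$; (ii) $\displaystyle\sum_{j=1}^\infty\sum_{k=2}^\infty\frac{\lambda^{X_{1,j}}_k}{\lambda^{X_{1,j}}_1}<\infty$.
   Context: For a centered Hilbert-space random element $Z$ with finite second moment, $\lambda^Z_1\ge\lambda^Z_2\ge\dots\ge 0$ denote the eigenvalues of its covariance operator $K^Z$ listed with multiplicity (padded with zeros if there are finitely many), $\Lambda^Z=\sum_k\lambda^Z_k$, $\bar\lambda^Z_k=\lambda^Z_k/\Lambda^Z$. Let $H_{1,j}$, $j\in\mathbb N$, be separable Hilbert spaces and $X_{1,j}$ centered $H_{1,j}$-valued random elements with $\mathbb E\|X_{1,j}\|^2<\infty$ and $\lambda^{X_{1,j}}_1>0$. $X_d=\otimes_{j=1}^dX_{1,j}$ means: $X_d$ is a centered random element of the Hilbert tensor product $H_d=\otimes_{j=1}^dH_{1,j}$ with covariance operator $K^{X_d}=\otimes_{j=1}^dK^{X_{1,j}}$; so the eigenvalues of $K^{X_d}$ are the products $\prod_{j=1}^d\lambda^{X_{1,j}}_{k_j}$, $(k_1,\dots,k_d)\in\mathbb N^d$, and $\Lambda^{X_d}=\prod_j\Lambda^{X_{1,j}}$. The average case approximation complexity is $n^{X_d}(\varepsilon)=\min\{n\in\mathbb N: e^{X_d}(n)\le\varepsilon e^{X_d}(0)\}$, where $e^{X_d}(0)=(\mathbb E\|X_d\|^2)^{1/2}$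 and $e^{X_d}(n)$ is the infimum of $(\mathbb E\|X_d-\sum_{m=1}^n l_m(X_d)\psi_m\|^2)^{1/2}$ over $\psi_m\in H_d$, $l_m\in H_d^*$; equivalently $n^{X_d}(\varepsilon)=\min\{n:\sum_{k>n}\bar\lambda^{X_d}_k\le\varepsilon^2\}$. *)

theory Defs
  imports "HOL-Analysis.Analysis"
begin

text \<open>Eigenvalues of a covariance operator "listed with multiplicity, padded with zeros":
  given a nonnegative family f on an index set I (the eigenvalues, indexed arbitrarily),
  mu is its nonincreasing rearrangement (0-based: mu k is the (k+1)-st largest eigenvalue),
  i.e. mu is nonnegative, nonincreasing, and every positive value c occurs in mu exactly
  as often as in f (equipotent level sets).\<close>
definition listed_with_mult :: "('i \<Rightarrow> real) \<Rightarrow> 'i set \<Rightarrow> (nat \<Rightarrow> real) \<Rightarrow> bool" where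
  "listed_with_mult f I mu \<longleftrightarrow>
     (\<forall>k. 0 \<le> mu k) \<and> (\<forall>k. mu (Suc k) \<le> mu k) \<and>
     (\<forall>c>0. \<exists>g. bij_betw g {k. mu k = c} {i\<in>I. f i = c})"

definition eig_seq :: "('i \<Rightarrow> real) \<Rightarrow> 'i set \<Rightarrow> nat \<Rightarrow> real" where
  "eig_seq f I = (SOME mu. listed_with_mult f I mu)"

text \<open>Average case approximation complexity via the eigenvalue formula
  n(eps) = min { n : sum_{k>n} lambda_bar_k \<le> eps^2 }, lambda_bar_k = lambda_k / Lambda.\<close>
definition avg_complexity :: "('i \<Rightarrow> real) \<Rightarrow> 'i set \<Rightarrow> real \<Rightarrow> nat" where
  "avg_complexity f I eps =
     (LEAST n::nat. (\<Sum>k. eig_seq f I (n + k) / (\<Sum>m. eig_seq f I m)) \<le> eps\<^sup>2)"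

text \<open>Multi-indices (k_1,...,k_d) in N^d (1-based), and the eigenvalues of the tensor
  product covariance operator: products prod_j lambda_{j,k_j}.\<close>
definition multi_idx :: "nat \<Rightarrow> (nat \<Rightarrow> nat) set" where
  "multi_idx d = PiE {1..d} (\<lambda>_. {1..})"

definition tensor_eig :: "(nat \<Rightarrow> nat \<Rightarrow> real) \<Rightarrow> nat \<Rightarrow> (nat \<Rightarrow> nat) \<Rightarrow> real" where
  "tensor_eig lam d ks = (\<Prod>j\<in>{1..d}. lam j (ks j))"

end

theory Submission
  imports Defs
begin

(* The eigenvalues of X_d are the products of the factor eigenvalues, so the trace of X_d is
   prod_j Lambda_j = prod_j lambda_{j,1} (1 + s_j) with s_j = sum_{k>=2} lambda_{j,k} / lambda_{j,1}.
   For any summable nonnegative family, n(eps) <= n holds iff some n indices carry at least the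
   fraction 1 - eps^2 of the trace.
   If n(eps) <= M for all d, then (1 - eps^2) times the trace is at most M times the largest
   eigenvalue prod_j lambda_{j,1}, so prod_j (1 + s_j) <= M / (1 - eps^2), which bounds the partial
   sums of s_j.
   Conversely, if sum_j s_j < oo, keep the K largest eigenvalues of the first J factors and only
   the largest one of the others. By the Weierstrass product inequality the resulting K^J
   multi-indices miss at most the sum of the per-factor deficits, which is below eps^2 uniformly
   in d once J and K are large (for j > J the deficit of the top eigenvalue is at most s_j). *)

section \<open>Nonincreasing rearrangement of a summable family\<close>

lemma sum_le_sum_lessThan_card:
  fixes mu :: "nat \<Rightarrow> 'a::ordered_comm_monoid_add"
  assumes "decseq mu" and "finite G"
  shows "sum mu G \<le> sum mu {..<card G}"
  using assms(2)
proof (induction "card G" arbitrary: G)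
  case (Suc n)
  define m where "m = Max G"
  have "G \<noteq> {}"
    using Suc by auto
  then have m: "m \<in> G" "card (G - {m}) = n"
    using Suc by (auto simp: m_def)
  have "G - {m} \<subseteq> {..<m}"
    using Suc.prems by (auto simp: m_def less_le)
  then have "n \<le> m"
    using m(2) by (metis card_lessThan card_mono finite_lessThan)
  have "sum mu G = mu m + sum mu (G - {m})"
    using Suc.prems m by (simp add: sum.remove)
  also have "\<dots> \<le> mu n + sum mu {..<n}"
    using Suc.hyps(1)[of "G - {m}"] Suc.prems m decseqD[OF assms(1) \<open>n \<le> m\<close>]
    by (intro add_mono) auto
  also have "\<dots> = sum mu {..<card G}"
    by (simp add: Suc.hyps(2)[symmetric] add.commute)
  finally show ?case .
qed simp

lemma listed_with_mult_bij:
  assumes "listed_with_mult f I mu"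
  obtains h where "bij_betw h {k. 0 < mu k} {i\<in>I. 0 < f i}" "\<And>k. 0 < mu k \<Longrightarrow> f (h k) = mu k"
proof -
  define g where "g c = (SOME g. bij_betw g {k. mu k = c} {i\<in>I. f i = c})" for c
  have g: "bij_betw (g c) {k. mu k = c} {i\<in>I. f i = c}" if "0 < c" for c
    using assms that unfolding listed_with_mult_def g_def by (metis (mono_tags, lifting) someI_ex)
  define h where "h k = g (mu k) k" for k
  have h: "h k \<in> I" "f (h k) = mu k" if "0 < mu k" for k
    using g[OF that] by (auto simp: h_def bij_betw_def)
  have "inj_on h {k. 0 < mu k}"
  proof (rule inj_onI)
    fix a b assume a: "a \<in> {k. 0 < mu k}" and "b \<in> {k. 0 < mu k}" and hab: "h a = h b"
    then have "mu a = mu b"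
      using h by (metis mem_Collect_eq)
    then show "a = b"
      using hab g[of "mu a"] a by (auto simp: h_def bij_betw_def dest: inj_onD)
  qed
  moreover have "{i\<in>I. 0 < f i} \<subseteq> h ` {k. 0 < mu k}"
  proof
    fix i assume i: "i \<in> {i\<in>I. 0 < f i}"
    then obtain k where "mu k = f i" "g (f i) k = i"
      using g[of "f i"] by (force simp: bij_betw_def)
    then show "i \<in> h ` {k. 0 < mu k}"
      using i by (auto simp: h_def intro!: image_eqI[of _ _ k])
  qed
  ultimately have "bij_betw h {k. 0 < mu k} {i\<in>I. 0 < f i}"
    using h by (auto simp: bij_betw_def)
  then show thesis
    using h(2) by (rule that)
qed

locale nonneg_summable =
  fixes f :: "'i \<Rightarrow> real" and I :: "'i set"
  assumes nonneg: "\<And>i. i \<in> I \<Longrightarrow> 0 \<le> f i"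
    and summable: "f summable_on I"
begin

lemma le_infsum: "i \<in> I \<Longrightarrow> f i \<le> infsum f I"
  using finite_sum_le_infsum[OF summable, of "{i}"] nonneg by auto

lemma finite_superlevel:
  assumes "0 < c"
  shows "finite {i\<in>I. c \<le> f i}"
proof (rule ccontr)
  assume "infinite {i\<in>I. c \<le> f i}"
  obtain n :: nat where n: "infsum f I / c < n"
    using reals_Archimedean2 by blast
  obtain F where F: "F \<subseteq> {i\<in>I. c \<le> f i}" "finite F" "card F = n"
    using infinite_arbitrarily_large[OF \<open>infinite _\<close>] by blast
  have "n * c = (\<Sum>i\<in>F. c)"
    using F by simp
  also have "\<dots> \<le> sum f F"
    using F by (intro sum_mono) auto
  also have "\<dots> \<le> infsum f I"
    using F nonneg by (intro finite_sum_le_infsum[OF summable]) auto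
  finally show False
    using n assms by (simp add: field_simps)
qed

lemma superlevel_constant_below:
  assumes "0 < c"
  obtains c' where "0 < c'" "c' < c"
    "\<And>x. c' < x \<Longrightarrow> x \<le> c \<Longrightarrow> {i\<in>I. x \<le> f i} = {i\<in>I. c \<le> f i}"
proof -
  let ?V = "f ` {i\<in>I. c/2 \<le> f i \<and> f i < c}"
  define c' where "c' = Max (insert (c/2) ?V)"
  have "finite {i\<in>I. c/2 \<le> f i \<and> f i < c}"
    by (rule finite_subset[OF _ finite_superlevel[of "c/2"]]) (use assms in auto)
  then have fin: "finite (insert (c/2) ?V)"
    by simp
  have half: "c/2 \<le> c'"
    unfolding c'_def by (rule Max_ge[OF fin]) simp
  have "c' < c"
    unfolding c'_def using fin assms by (subst Max_less_iff) auto
  have below: "f i \<le> c'" if "i \<in> I" "c/2 \<le> f i" "f i < c" for i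
    unfolding c'_def by (rule Max_ge[OF fin]) (use that in blast)
  have "{i\<in>I. x \<le> f i} = {i\<in>I. c \<le> f i}" if x: "c' < x" "x \<le> c" for x
  proof -
    have "c \<le> f i" if "i \<in> I" "x \<le> f i" for i
    proof (rule ccontr)
      assume "\<not> c \<le> f i"
      moreover have "c/2 \<le> f i"
        using half x that by linarith
      ultimately have "f i \<le> c'"
        using below \<open>i \<in> I\<close> by simp
      with x that show False
        by linarith
    qed
    then show ?thesis
      using x by fastforce
  qed
  moreover have "0 < c'"
    using half assms by linarith
  ultimately show thesis
    using \<open>c' < c\<close> that by blast
qed

lemma strict_superlevel_eq:
  assumes "0 < c"
  obtains m where "c < m" "{i\<in>I. c < f i} = {i\<in>I. m \<le> f i}"
proof -
  let ?V = "f ` {i\<in>I. c < f i}"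
  define m where "m = Min (insert (c + 1) ?V)"
  have "finite {i\<in>I. c < f i}"
    by (rule finite_subset[OF _ finite_superlevel[OF assms]]) auto
  then have fin: "finite ?V"
    by simp
  then have "c < m"
    by (simp add: m_def)
  moreover have "m \<le> f i" if "i \<in> I" "c < f i" for i
    unfolding m_def using fin that by (intro Min_le) auto
  ultimately have "{i\<in>I. c < f i} = {i\<in>I. m \<le> f i}"
    by force
  with \<open>c < m\<close> show thesis
    by (rule that)
qed

definition count_ge :: "real \<Rightarrow> nat" where
  "count_ge c = card {i\<in>I. c \<le> f i}"

(* the (k+1)-st largest value of f, counted with multiplicity *)
definition rearrangement :: "nat \<Rightarrow> real" where
  "rearrangement k = Sup (insert 0 {c. 0 < c \<and> k < count_ge c})"

lemma count_ge_antimono: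
  assumes "0 < c" "c \<le> x"
  shows "count_ge x \<le> count_ge c"
  unfolding count_ge_def using assms finite_superlevel[OF assms(1)] by (auto intro: card_mono)

lemma bdd_above_rearrangement: "bdd_above (insert 0 {c. 0 < c \<and> k < count_ge c})"
proof (rule bdd_aboveI)
  fix x assume x: "x \<in> insert 0 {c. 0 < c \<and> k < count_ge c}"
  show "x \<le> infsum f I"
  proof (cases "x = 0")
    case True
    then show ?thesis
      using nonneg by (simp add: infsum_nonneg)
  next
    case False
    then have "k < card {i\<in>I. x \<le> f i}"
      using x by (simp add: count_ge_def)
    then have "{i\<in>I. x \<le> f i} \<noteq> {}"
      by (metis card.empty not_less0)
    then obtain i where "i \<in> I" "x \<le> f i"
      by blast
    then show ?thesis
      using le_infsum by (meson order_trans)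
  qed
qed

lemma rearrangement_nonneg: "0 \<le> rearrangement k"
  unfolding rearrangement_def using bdd_above_rearrangement by (rule cSup_upper[rotated]) simp

lemma le_rearrangement_iff:
  assumes "0 < c"
  shows "c \<le> rearrangement k \<longleftrightarrow> k < count_ge c"
proof
  assume "k < count_ge c"
  then show "c \<le> rearrangement k"
    unfolding rearrangement_def using assms by (intro cSup_upper[OF _ bdd_above_rearrangement]) simp
next
  assume "c \<le> rearrangement k"
  obtain c' where c': "0 < c'" "c' < c"
      and const: "\<And>x. c' < x \<Longrightarrow> x \<le> c \<Longrightarrow> {i\<in>I. x \<le> f i} = {i\<in>I. c \<le> f i}"
    using superlevel_constant_below[OF assms] by blast
  have "\<forall>y<c. \<exists>x\<in>insert 0 {c. 0 < c \<and> k < count_ge c}. y < x"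
    using \<open>c \<le> rearrangement k\<close> unfolding rearrangement_def
    by (subst (asm) le_cSup_iff[OF _ bdd_above_rearrangement]) auto
  then obtain x where x: "x \<in> insert 0 {c. 0 < c \<and> k < count_ge c}" "c' < x"
    using \<open>c' < c\<close> by blast
  then have "k < count_ge x"
    using c'(1) by (cases "x = 0") auto
  also have "count_ge x \<le> count_ge c"
  proof (cases "x \<le> c")
    case True
    then show ?thesis
      using const[OF x(2)] by (simp add: count_ge_def)
  next
    case False
    then show ?thesis
      using count_ge_antimono[OF assms] by simp
  qed
  finally show "k < count_ge c" .
qed

lemma rearrangement_Suc_le: "rearrangement (Suc k) \<le> rearrangement k"
proof (rule ccontr)
  assume "\<not> ?thesis"
  then have "0 < rearrangement (Suc k)"
    using rearrangement_nonneg[of k] by linarith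
  then have "k < count_ge (rearrangement (Suc k))"
    using le_rearrangement_iff by (metis Suc_lessD order_refl)
  with \<open>\<not> ?thesis\<close> \<open>0 < rearrangement (Suc k)\<close> show False
    using le_rearrangement_iff by blast
qed

lemma rearrangement_level_eq:
  assumes "0 < c"
  shows "{k. rearrangement k = c} = {card {i\<in>I. c < f i}..<count_ge c}"
proof -
  obtain m where m: "c < m" "{i\<in>I. c < f i} = {i\<in>I. m \<le> f i}"
    using strict_superlevel_eq[OF assms] by blast
  have "c < rearrangement k \<longleftrightarrow> k < count_ge m" for k
  proof
    assume less: "c < rearrangement k"
    then have "k < count_ge (rearrangement k)"
      using assms le_rearrangement_iff[of "rearrangement k" k] by simp
    also have "count_ge (rearrangement k) \<le> count_ge m"
    proof -
      have "{i\<in>I. rearrangement k \<le> f i} \<subseteq> {i\<in>I. m \<le> f i}"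
        unfolding m(2)[symmetric] using less by auto
      then show ?thesis
        unfolding count_ge_def using m(1) assms by (intro card_mono finite_superlevel) auto
    qed
    finally show "k < count_ge m" .
  next
    assume "k < count_ge m"
    then have "m \<le> rearrangement k"
      using le_rearrangement_iff[of m k] m(1) assms by simp
    then show "c < rearrangement k"
      using m(1) by linarith
  qed
  then have "{k. c < rearrangement k} = {..<count_ge m}"
    by blast
  moreover have "{k. c \<le> rearrangement k} = {..<count_ge c}"
    using le_rearrangement_iff[OF assms] by blast
  moreover have "{k. rearrangement k = c} = {k. c \<le> rearrangement k} - {k. c < rearrangement k}"
    by auto
  moreover have "count_ge m = card {i\<in>I. c < f i}"
    by (simp add: count_ge_def m(2))
  ultimately show ?thesis
    by auto
qed

lemma listed_with_mult_rearrangement: "listed_with_mult f I rearrangement"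
  unfolding listed_with_mult_def
proof (intro conjI allI impI rearrangement_nonneg rearrangement_Suc_le)
  fix c :: real assume c: "0 < c"
  have sub: "{i\<in>I. c < f i} \<subseteq> {i\<in>I. c \<le> f i}"
    by auto
  have "{i\<in>I. f i = c} = {i\<in>I. c \<le> f i} - {i\<in>I. c < f i}"
    by auto
  moreover have "finite {i\<in>I. c < f i}"
    using finite_subset[OF sub finite_superlevel[OF c]] .
  ultimately have "finite {i\<in>I. f i = c}"
      and "card {i\<in>I. f i = c} = card {k. rearrangement k = c}"
    using finite_superlevel[OF c] card_Diff_subset[OF _ sub]
    by (simp_all add: rearrangement_level_eq[OF c] count_ge_def)
  then show "\<exists>g. bij_betw g {k. rearrangement k = c} {i\<in>I. f i = c}"
    by (metis finite_same_card_bij finite_atLeastLessThan rearrangement_level_eq[OF c])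
qed

abbreviation eig :: "nat \<Rightarrow> real" where
  "eig \<equiv> eig_seq f I"

lemma listed_with_mult_eig: "listed_with_mult f I eig"
  unfolding eig_seq_def by (rule someI[where P = "listed_with_mult f I", OF listed_with_mult_rearrangement])

lemma eig_nonneg: "0 \<le> eig k"
  and decseq_eig: "decseq eig"
  using listed_with_mult_eig by (auto simp: listed_with_mult_def decseq_Suc_iff)

lemma eig_sums: "eig sums infsum f I"
proof -
  obtain h where h: "bij_betw h {k. 0 < eig k} {i\<in>I. 0 < f i}" "\<And>k. 0 < eig k \<Longrightarrow> f (h k) = eig k"
    using listed_with_mult_bij[OF listed_with_mult_eig] by blast
  have "(f has_sum infsum f I) {i\<in>I. 0 < f i} \<longleftrightarrow> (f has_sum infsum f I) I"
    using nonneg by (intro has_sum_cong_neutral) (auto simp: less_le)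
  then have "(f has_sum infsum f I) {i\<in>I. 0 < f i}"
    using has_sum_infsum[OF summable] by blast
  then have "((\<lambda>k. f (h k)) has_sum infsum f I) {k. 0 < eig k}"
    using has_sum_reindex_bij_betw[OF h(1)] by blast
  moreover have "((\<lambda>k. f (h k)) has_sum infsum f I) {k. 0 < eig k} \<longleftrightarrow> (eig has_sum infsum f I) UNIV"
    using h(2) eig_nonneg by (intro has_sum_cong_neutral) (auto simp: less_le)
  ultimately show ?thesis
    by (simp add: has_sum_imp_sums)
qed

lemma sum_le_sum_eig:
  assumes "finite F" "F \<subseteq> I" "card F \<le> n"
  shows "sum f F \<le> (\<Sum>k<n. eig k)"
proof -
  obtain h where h: "bij_betw h {k. 0 < eig k} {i\<in>I. 0 < f i}" "\<And>k. 0 < eig k \<Longrightarrow> f (h k) = eig k"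
    using listed_with_mult_bij[OF listed_with_mult_eig] by blast
  define F' where "F' = {i\<in>F. 0 < f i}"
  define G where "G = {k. 0 < eig k \<and> h k \<in> F}"
  have "F' \<subseteq> h ` {k. 0 < eig k}"
    using h(1) assms(2) by (auto simp: F'_def bij_betw_def)
  then have "h ` G = F'"
    using h by (auto simp: F'_def G_def)
  then have hG: "bij_betw h G F'"
    using h(1) by (auto simp: G_def intro: bij_betw_subset)
  have "card G \<le> n"
    using bij_betw_same_card[OF hG] card_mono[OF assms(1), of F'] assms(3) by (auto simp: F'_def)
  have "sum f F = sum f F'"
    unfolding F'_def using assms nonneg by (intro sum.mono_neutral_right) (auto simp: less_le)
  also have "\<dots> = sum eig G"
    using sum.reindex_bij_betw[OF hG, of f] h(2) by (simp add: G_def)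
  also have "\<dots> \<le> (\<Sum>k<card G. eig k)"
    using hG assms(1) by (intro sum_le_sum_lessThan_card decseq_eig)
      (auto simp: F'_def bij_betw_finite)
  also have "\<dots> \<le> (\<Sum>k<n. eig k)"
    using \<open>card G \<le> n\<close> eig_nonneg by (intro sum_mono2) auto
  finally show ?thesis .
qed

lemma sum_eig_attained:
  obtains F where "finite F" "F \<subseteq> I" "card F \<le> n" "sum f F = (\<Sum>k<n. eig k)"
proof -
  obtain h where h: "bij_betw h {k. 0 < eig k} {i\<in>I. 0 < f i}" "\<And>k. 0 < eig k \<Longrightarrow> f (h k) = eig k"
    using listed_with_mult_bij[OF listed_with_mult_eig] by blast
  define G where "G = {k. k < n \<and> 0 < eig k}"
  have inj: "inj_on h G"
    using h(1) by (auto simp: G_def bij_betw_def intro: inj_on_subset)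
  have "card (h ` G) \<le> n"
    using card_image_le[of G h] card_mono[of "{..<n}" G] by (force simp: G_def)
  moreover have "h ` G \<subseteq> I"
    using h(1) by (auto simp: G_def bij_betw_def)
  moreover have "sum f (h ` G) = (\<Sum>k<n. eig k)"
  proof -
    have "sum f (h ` G) = sum eig G"
      using sum.reindex[OF inj, of f] h(2) by (simp add: G_def)
    also have "\<dots> = (\<Sum>k<n. eig k)"
      using eig_nonneg by (intro sum.mono_neutral_left) (auto simp: G_def less_le)
    finally show ?thesis .
  qed
  ultimately show thesis
    by (intro that[of "h ` G"]) (auto simp: G_def)
qed

lemma eig_tail_le_iff:
  assumes "0 < infsum f I"
  shows "(\<Sum>k. eig (n + k) / (\<Sum>m. eig m)) \<le> e \<longleftrightarrow> (1 - e) * infsum f I \<le> (\<Sum>k<n. eig k)"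
proof -
  have "summable eig" and total: "(\<Sum>m. eig m) = infsum f I"
    using eig_sums by (auto simp: sums_iff)
  have "summable (\<lambda>k. eig (n + k))"
    using summable_ignore_initial_segment[OF \<open>summable eig\<close>, of n] by (simp add: add.commute)
  then have "(\<Sum>k. eig (n + k) / (\<Sum>m. eig m)) = (\<Sum>k. eig (n + k)) / infsum f I"
    by (simp add: suminf_divide total)
  also have "(\<Sum>k. eig (n + k)) = infsum f I - (\<Sum>k<n. eig k)"
    using suminf_minus_initial_segment[OF \<open>summable eig\<close>, of n] total by (simp add: add.commute)
  finally show ?thesis
    using assms by (simp add: divide_le_eq algebra_simps)
qed

lemma avg_complexity_le_iff_partial_sum:
  assumes "0 < infsum f I" "0 < eps"
  shows "avg_complexity f I eps \<le> n \<longleftrightarrow> (1 - eps\<^sup>2) * infsum f I \<le> (\<Sum>k<n. eig k)"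
proof -
  define P where "P n \<longleftrightarrow> (1 - eps\<^sup>2) * infsum f I \<le> (\<Sum>k<n. eig k)" for n
  have complexity: "avg_complexity f I eps = (LEAST n. P n)"
    unfolding avg_complexity_def P_def eig_tail_le_iff[OF assms(1)] ..
  have "(\<lambda>n. \<Sum>k<n. eig k) \<longlonglongrightarrow> infsum f I"
    using eig_sums by (simp add: sums_def)
  moreover have "(1 - eps\<^sup>2) * infsum f I < infsum f I"
    using assms by simp
  ultimately have "\<forall>\<^sub>F n in sequentially. (1 - eps\<^sup>2) * infsum f I < (\<Sum>k<n. eig k)"
    by (rule order_tendstoD(1))
  then have "\<exists>n. P n"
    unfolding P_def eventually_sequentially by (meson less_imp_le order_refl)
  then have least: "P (LEAST n. P n)"
    by (rule LeastI_ex)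
  have "P n" if "P m" "m \<le> n" for m n
  proof -
    have "(\<Sum>k<m. eig k) \<le> (\<Sum>k<n. eig k)"
      using that(2) eig_nonneg by (intro sum_mono2) auto
    with that(1) show ?thesis
      unfolding P_def by linarith
  qed
  then show ?thesis
    unfolding complexity P_def[symmetric] using least by (blast intro: Least_le)
qed

lemma avg_complexity_le_iff:
  assumes "0 < infsum f I" "0 < eps"
  shows "avg_complexity f I eps \<le> n \<longleftrightarrow>
    (\<exists>F. finite F \<and> F \<subseteq> I \<and> card F \<le> n \<and> (1 - eps\<^sup>2) * infsum f I \<le> sum f F)"
  unfolding avg_complexity_le_iff_partial_sum[OF assms]
proof
  assume le: "(1 - eps\<^sup>2) * infsum f I \<le> (\<Sum>k<n. eig k)"
  obtain F where "finite F" "F \<subseteq> I" "card F \<le> n" "sum f F = (\<Sum>k<n. eig k)"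
    using sum_eig_attained .
  with le show "\<exists>F. finite F \<and> F \<subseteq> I \<and> card F \<le> n \<and> (1 - eps\<^sup>2) * infsum f I \<le> sum f F"
    by auto
next
  assume "\<exists>F. finite F \<and> F \<subseteq> I \<and> card F \<le> n \<and> (1 - eps\<^sup>2) * infsum f I \<le> sum f F"
  then show "(1 - eps\<^sup>2) * infsum f I \<le> (\<Sum>k<n. eig k)"
    using sum_le_sum_eig by (meson order_trans)
qed

end

section \<open>Tensor products of eigenvalue sequences\<close>

lemma summable_tail_sums_small:
  fixes s :: "nat \<Rightarrow> real"
  assumes summable: "summable (\<lambda>j. s (Suc j))"
    and nonneg: "\<And>j. 1 \<le> j \<Longrightarrow> 0 \<le> s j"
    and "0 < \<epsilon>"
  obtains J where "\<And>d. (\<Sum>j\<in>{Suc J..d}. s j) < \<epsilon>"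
proof -
  define S where "S = (\<Sum>j. s (Suc j))"
  have partial_le: "(\<Sum>j\<in>{1..n}. s j) \<le> S" for n
  proof -
    have "(\<Sum>j<n. s (Suc j)) \<le> S"
      unfolding S_def using summable nonneg by (intro sum_le_suminf) auto
    then show ?thesis
      by (simp add: sum.atLeast1_atMost_eq[symmetric])
  qed
  have "(\<lambda>n. \<Sum>j<n. s (Suc j)) \<longlonglongrightarrow> S"
    using summable unfolding S_def by (rule summable_LIMSEQ)
  then have "\<forall>\<^sub>F n in sequentially. S - \<epsilon> < (\<Sum>j<n. s (Suc j))"
    using \<open>0 < \<epsilon>\<close> by (intro order_tendstoD(1)) auto
  then obtain J where J: "S - \<epsilon> < (\<Sum>j\<in>{1..J}. s j)"
    by (auto simp: eventually_sequentially sum.atLeast1_atMost_eq[symmetric])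
  have "(\<Sum>j\<in>{Suc J..d}. s j) < \<epsilon>" for d
  proof (cases "J \<le> d")
    case True
    then have "(\<Sum>j\<in>{1..J}. s j) + (\<Sum>j\<in>{Suc J..d}. s j) = (\<Sum>j\<in>{1..d}. s j)"
      by (subst sum.union_disjoint[symmetric]) (auto intro: sum.cong)
    then show ?thesis
      using partial_le[of d] J by linarith
  next
    case False
    then show ?thesis
      using partial_le[of J] J by simp
  qed
  then show thesis
    by (rule that)
qed

lemma uniform_truncation:
  fixes D :: "nat \<Rightarrow> nat \<Rightarrow> real" and s :: "nat \<Rightarrow> real"
  assumes summable: "summable (\<lambda>j. s (Suc j))"
    and D_nonneg: "\<And>j K. 1 \<le> j \<Longrightarrow> 0 \<le> D j K"
    and D_one: "\<And>j. 1 \<le> j \<Longrightarrow> D j 1 \<le> s j"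
    and D_lim: "\<And>j. 1 \<le> j \<Longrightarrow> D j \<longlonglongrightarrow> 0"
    and "0 < \<delta>"
  obtains J K where "1 \<le> K" "\<And>d. (\<Sum>j\<in>{1..d}. D j (if j \<le> J then K else 1)) \<le> \<delta>"
proof -
  have "0 \<le> s j" if "1 \<le> j" for j
    using D_nonneg[OF that] D_one[OF that] by (rule order_trans)
  then obtain J where J: "\<And>d. (\<Sum>j\<in>{Suc J..d}. s j) < \<delta>/2"
    using summable_tail_sums_small[OF summable] \<open>0 < \<delta>\<close> by (metis half_gt_zero)
  have "(\<lambda>K. \<Sum>j\<in>{1..J}. D j K) \<longlonglongrightarrow> 0"
    using D_lim by (intro tendsto_null_sum) auto
  then have "\<forall>\<^sub>F K in sequentially. (\<Sum>j\<in>{1..J}. D j K) < \<delta>/2 \<and> 1 \<le> K"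
    using \<open>0 < \<delta>\<close> by (intro eventually_conj order_tendstoD(2) eventually_ge_at_top) auto
  then obtain K where K: "(\<Sum>j\<in>{1..J}. D j K) < \<delta>/2" "1 \<le> K"
    by (auto simp: eventually_sequentially)
  have "(\<Sum>j\<in>{1..d}. D j (if j \<le> J then K else 1)) \<le> \<delta>" for d
  proof -
    have "(\<Sum>j\<in>{1..d}. D j (if j \<le> J then K else 1))
        = (\<Sum>j\<in>({1..d} \<inter> {..J}) \<union> {Suc J..d}. D j (if j \<le> J then K else 1))"
      by (rule sum.cong) auto
    also have "\<dots> = (\<Sum>j\<in>{1..d} \<inter> {..J}. D j K) + (\<Sum>j\<in>{Suc J..d}. D j 1)"
      by (subst sum.union_disjoint) (auto intro!: arg_cong2[where f = "(+)"] sum.cong)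
    also have "(\<Sum>j\<in>{1..d} \<inter> {..J}. D j K) \<le> (\<Sum>j\<in>{1..J}. D j K)"
      using D_nonneg by (intro sum_mono2) auto
    also have "(\<Sum>j\<in>{Suc J..d}. D j 1) \<le> (\<Sum>j\<in>{Suc J..d}. s j)"
      using D_one by (intro sum_mono) auto
    finally show ?thesis
      using J[of d] K(1) by linarith
  qed
  with K(2) show thesis
    by (rule that)
qed

lemma card_truncation_box:
  fixes K J d :: nat
  assumes "1 \<le> K"
  shows "card (PiE {1..d} (\<lambda>j. {1..if j \<le> J then K else 1})) \<le> K ^ J"
proof -
  have "card (PiE {1..d} (\<lambda>j. {1..if j \<le> J then K else 1})) = (\<Prod>j\<in>{1..d}. if j \<le> J then K else 1)"
    by (simp add: card_PiE)
  also have "\<dots> = K ^ card ({1..d} \<inter> {j. j \<le> J})"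
    by (simp add: prod.If_cases)
  also have "\<dots> \<le> K ^ J"
  proof -
    have "card ({1..d} \<inter> {j. j \<le> J}) \<le> card {1..J}"
      by (intro card_mono) auto
    then show ?thesis
      using assms by (intro power_increasing) auto
  qed
  finally show ?thesis .
qed

locale factor_eigenvalues =
  fixes lam :: "nat \<Rightarrow> nat \<Rightarrow> real"
  assumes nonneg: "\<And>j k. 1 \<le> j \<Longrightarrow> 1 \<le> k \<Longrightarrow> 0 \<le> lam j k"
    and noninc: "\<And>j k. 1 \<le> j \<Longrightarrow> 1 \<le> k \<Longrightarrow> lam j (Suc k) \<le> lam j k"
    and trace: "\<And>j. 1 \<le> j \<Longrightarrow> summable (\<lambda>k. lam j (Suc k))"
    and pos: "\<And>j. 1 \<le> j \<Longrightarrow> 0 < lam j 1"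
begin

definition Lambda :: "nat \<Rightarrow> real" where
  "Lambda j = (\<Sum>k. lam j (Suc k))"

definition tail_ratio :: "nat \<Rightarrow> real" where
  "tail_ratio j = (\<Sum>k. lam j (k + 2)) / lam j 1"

definition captured_fraction :: "nat \<Rightarrow> nat \<Rightarrow> real" where
  "captured_fraction j K = (\<Sum>k\<in>{1..K}. lam j k) / Lambda j"

lemma lam_le_first:
  assumes "1 \<le> j" "1 \<le> k"
  shows "lam j k \<le> lam j 1"
  using assms(2)
proof (induction k rule: dec_induct)
  case (step k)
  then show ?case
    using noninc[OF assms(1), of k] by simp
qed simp

lemma lam_sums: "1 \<le> j \<Longrightarrow> (\<lambda>k. lam j (Suc k)) sums Lambda j"
  using trace by (simp add: Lambda_def summable_sums)

lemma lam_has_sum: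
  assumes "1 \<le> j"
  shows "(lam j has_sum Lambda j) {1..}"
proof -
  have "((\<lambda>k. lam j (Suc k)) has_sum Lambda j) UNIV"
    using lam_sums[OF assms] nonneg[OF assms] by (intro sums_nonneg_imp_has_sum) auto
  moreover have "bij_betw Suc UNIV {1::nat..}"
    using atLeast_Suc_greaterThan[of 0] by (simp add: greaterThan_0)
  ultimately show ?thesis
    using has_sum_reindex_bij_betw by blast
qed

lemma Lambda_eq:
  assumes "1 \<le> j"
  shows "Lambda j = lam j 1 * (1 + tail_ratio j)"
  using suminf_split_head[OF trace[OF assms]] pos[OF assms]
  by (simp add: Lambda_def tail_ratio_def field_simps numeral_2_eq_2)

lemma tail_ratio_nonneg:
  assumes "1 \<le> j"
  shows "0 \<le> tail_ratio j"
proof -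
  have "summable (\<lambda>k. lam j (k + 2))"
    using summable_ignore_initial_segment[OF trace[OF assms], of 1] by (simp add: numeral_2_eq_2)
  then have "0 \<le> (\<Sum>k. lam j (k + 2))"
    using nonneg[OF assms] by (intro suminf_nonneg) auto
  then show ?thesis
    using pos[OF assms] by (simp add: tail_ratio_def)
qed

lemma tail_ratio_eq_suminf:
  assumes "1 \<le> j"
  shows "tail_ratio j = (\<Sum>k. lam j (k + 2) / lam j 1)"
proof -
  have "summable (\<lambda>k. lam j (k + 2))"
    using summable_ignore_initial_segment[OF trace[OF assms], of 1] by (simp add: numeral_2_eq_2)
  then show ?thesis
    by (simp add: tail_ratio_def suminf_divide)
qed

lemma Lambda_pos: "1 \<le> j \<Longrightarrow> 0 < Lambda j"
  using Lambda_eq pos tail_ratio_nonneg by (simp add: add_pos_nonneg)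

lemma tensor_eig_has_sum: "(tensor_eig lam d has_sum (\<Prod>j\<in>{1..d}. Lambda j)) (multi_idx d)"
proof -
  have "(\<lambda>k. norm (lam j k)) summable_on {1..}" if "j \<in> {1..d}" for j
  proof -
    have "(\<lambda>k. norm (lam j k)) summable_on {1..} \<longleftrightarrow> lam j summable_on {1..}"
      using nonneg[of j] that by (intro summable_on_cong) auto
    then show ?thesis
      using lam_has_sum[of j] that by (auto dest: has_sum_imp_summable)
  qed
  then have "infsum (tensor_eig lam d) (multi_idx d) = (\<Prod>j\<in>{1..d}. infsum (lam j) {1..})"
    unfolding tensor_eig_def multi_idx_def by (intro infsum_prod_PiE_abs) auto
  also have "\<dots> = (\<Prod>j\<in>{1..d}. Lambda j)"
    using lam_has_sum by (intro prod.cong) (auto dest: infsumI)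
  finally have infsum: "infsum (tensor_eig lam d) (multi_idx d) = (\<Prod>j\<in>{1..d}. Lambda j)" .
  (* a non-summable family has infinite sum 0, but the product of the traces is positive *)
  moreover have "0 < (\<Prod>j\<in>{1..d}. Lambda j)"
    using Lambda_pos by (intro prod_pos) auto
  ultimately have "tensor_eig lam d summable_on multi_idx d"
    using infsum_not_exists[of "tensor_eig lam d" "multi_idx d"] by linarith
  with infsum show ?thesis
    by (metis has_sum_infsum)
qed

lemma infsum_tensor_eig: "infsum (tensor_eig lam d) (multi_idx d) = (\<Prod>j\<in>{1..d}. Lambda j)"
  using tensor_eig_has_sum by (rule infsumI)

lemma infsum_tensor_eig_pos: "0 < infsum (tensor_eig lam d) (multi_idx d)"
  unfolding infsum_tensor_eig using Lambda_pos by (intro prod_pos) auto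

lemma nonneg_summable_tensor_eig: "nonneg_summable (tensor_eig lam d) (multi_idx d)"
proof
  show "0 \<le> tensor_eig lam d ks" if "ks \<in> multi_idx d" for ks
    unfolding tensor_eig_def
  proof (rule prod_nonneg)
    fix j assume "j \<in> {1..d}"
    with that show "0 \<le> lam j (ks j)"
      by (intro nonneg) (auto simp: multi_idx_def)
  qed
  show "tensor_eig lam d summable_on multi_idx d"
    using tensor_eig_has_sum by (rule has_sum_imp_summable)
qed

lemma tensor_eig_le_first:
  assumes "ks \<in> multi_idx d"
  shows "tensor_eig lam d ks \<le> (\<Prod>j\<in>{1..d}. lam j 1)"
  unfolding tensor_eig_def
proof (rule prod_mono)
  fix j assume j: "j \<in> {1..d}"
  then have "1 \<le> ks j"
    using assms by (auto simp: multi_idx_def)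
  with j show "0 \<le> lam j (ks j) \<and> lam j (ks j) \<le> lam j 1"
    using nonneg lam_le_first by auto
qed

lemma captured_fraction_bounds:
  assumes "1 \<le> j"
  shows "0 \<le> captured_fraction j K" "captured_fraction j K \<le> 1"
proof -
  have "(\<Sum>k\<in>{1..K}. lam j k) = (\<Sum>k<K. lam j (Suc k))"
    by (simp add: sum.atLeast1_atMost_eq[symmetric])
  also have "\<dots> \<le> Lambda j"
    unfolding Lambda_def using trace[OF assms] nonneg[OF assms] by (intro sum_le_suminf) auto
  finally show "captured_fraction j K \<le> 1"
    using Lambda_pos[OF assms] by (simp add: captured_fraction_def)
  show "0 \<le> captured_fraction j K"
    unfolding captured_fraction_def using nonneg[OF assms] Lambda_pos[OF assms]
    by (intro divide_nonneg_pos sum_nonneg) auto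
qed

lemma captured_fraction_tendsto: "1 \<le> j \<Longrightarrow> captured_fraction j \<longlonglongrightarrow> 1"
  using lam_sums[of j] Lambda_pos[of j] unfolding captured_fraction_def sums_def
  by (auto simp: sum.atLeast1_atMost_eq[symmetric] intro: tendsto_eq_intros)

lemma one_minus_captured_fraction_one_le:
  assumes "1 \<le> j"
  shows "1 - captured_fraction j 1 \<le> tail_ratio j"
proof -
  have "0 < 1 + tail_ratio j"
    using tail_ratio_nonneg[OF assms] by simp
  moreover have "captured_fraction j 1 = 1 / (1 + tail_ratio j)"
    using pos[OF assms] unfolding captured_fraction_def Lambda_eq[OF assms] by simp
  ultimately have "1 - captured_fraction j 1 = tail_ratio j / (1 + tail_ratio j)"
    by (simp add: field_simps)
  also have "\<dots> \<le> tail_ratio j"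
    using tail_ratio_nonneg[OF assms] by (simp add: divide_le_eq algebra_simps)
  finally show ?thesis .
qed

lemma sum_tensor_eig_box:
  "sum (tensor_eig lam d) (PiE {1..d} (\<lambda>j. {1..K j}))
     = (\<Prod>j\<in>{1..d}. captured_fraction j (K j)) * infsum (tensor_eig lam d) (multi_idx d)"
proof -
  have "sum (tensor_eig lam d) (PiE {1..d} (\<lambda>j. {1..K j})) = (\<Prod>j\<in>{1..d}. \<Sum>k\<in>{1..K j}. lam j k)"
    unfolding tensor_eig_def by (rule prod_sum_PiE[symmetric]) auto
  also have "\<dots> = (\<Prod>j\<in>{1..d}. captured_fraction j (K j) * Lambda j)"
  proof (rule prod.cong)
    fix j assume "j \<in> {1..d}"
    then have "Lambda j \<noteq> 0"
      using Lambda_pos[of j] by simp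
    then show "(\<Sum>k\<in>{1..K j}. lam j k) = captured_fraction j (K j) * Lambda j"
      by (simp add: captured_fraction_def)
  qed simp
  finally show ?thesis
    by (simp add: infsum_tensor_eig prod.distrib)
qed

lemma sum_tensor_eig_box_ge:
  "(1 - (\<Sum>j\<in>{1..d}. 1 - captured_fraction j (K j))) * infsum (tensor_eig lam d) (multi_idx d)
     \<le> sum (tensor_eig lam d) (PiE {1..d} (\<lambda>j. {1..K j}))"
proof -
  have "1 - (\<Sum>j\<in>{1..d}. 1 - captured_fraction j (K j))
      \<le> (\<Prod>j\<in>{1..d}. 1 - (1 - captured_fraction j (K j)))"
    using captured_fraction_bounds by (intro Weierstrass_prod_ineq) auto
  then show ?thesis
    unfolding sum_tensor_eig_box using infsum_tensor_eig_pos by (simp add: mult_right_mono)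
qed

lemma infsum_tensor_eig_eq:
  "infsum (tensor_eig lam d) (multi_idx d)
     = (\<Prod>j\<in>{1..d}. lam j 1) * (\<Prod>j\<in>{1..d}. 1 + tail_ratio j)"
  unfolding infsum_tensor_eig prod.distrib[symmetric] by (rule prod.cong) (auto simp: Lambda_eq)

lemma summable_tail_ratio_if_bounded_complexity:
  assumes eps: "0 < eps" "eps < 1"
    and bounded: "\<And>d. 1 \<le> d \<Longrightarrow> avg_complexity (tensor_eig lam d) (multi_idx d) eps \<le> M"
  shows "summable (\<lambda>j. tail_ratio (Suc j))"
proof (rule summableI_nonneg_bounded)
  have "0 < 1 - eps\<^sup>2"
    using eps by (simp add: power_less_one_iff)
  show "0 \<le> tail_ratio (Suc j)" for j
    using tail_ratio_nonneg by simp
  show "(\<Sum>j<d. tail_ratio (Suc j)) \<le> M / (1 - eps\<^sup>2)" for d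
  proof (cases "d = 0")
    case True
    then show ?thesis
      using \<open>0 < 1 - eps\<^sup>2\<close> by simp
  next
    case False
    interpret nonneg_summable "tensor_eig lam d" "multi_idx d"
      by (rule nonneg_summable_tensor_eig)
    define B where "B = (\<Prod>j\<in>{1..d}. lam j 1)"
    have "0 < B"
      unfolding B_def using pos by (intro prod_pos) auto
    obtain F where F: "F \<subseteq> multi_idx d" "card F \<le> M"
        "(1 - eps\<^sup>2) * infsum (tensor_eig lam d) (multi_idx d) \<le> sum (tensor_eig lam d) F"
      using bounded[of d] False avg_complexity_le_iff[OF infsum_tensor_eig_pos eps(1)] by auto
    have "sum (tensor_eig lam d) F \<le> card F * B"
      unfolding B_def using F(1) tensor_eig_le_first by (intro sum_bounded_above) auto
    also have "\<dots> \<le> M * B"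
      using F(2) \<open>0 < B\<close> by (intro mult_right_mono) auto
    finally have "B * ((1 - eps\<^sup>2) * (\<Prod>j\<in>{1..d}. 1 + tail_ratio j)) \<le> B * M"
      using F(3) unfolding infsum_tensor_eig_eq B_def[symmetric] by (simp add: mult_ac)
    then have "(1 - eps\<^sup>2) * (\<Prod>j\<in>{1..d}. 1 + tail_ratio j) \<le> M"
      using \<open>0 < B\<close> by (rule mult_left_le_imp_le)
    have "(\<Sum>j<d. tail_ratio (Suc j)) = (\<Sum>j\<in>{1..d}. tail_ratio j)"
      by (simp add: sum.atLeast1_atMost_eq)
    also have "\<dots> \<le> (\<Prod>j\<in>{1..d}. 1 + tail_ratio j)"
      using tail_ratio_nonneg by (intro sum_le_prod) auto
    also have "\<dots> \<le> M / (1 - eps\<^sup>2)"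
      using \<open>(1 - eps\<^sup>2) * _ \<le> M\<close> \<open>0 < 1 - eps\<^sup>2\<close> by (simp add: le_divide_eq mult.commute)
    finally show ?thesis .
  qed
qed

lemma bounded_complexity_if_summable_tail_ratio:
  assumes summable: "summable (\<lambda>j. tail_ratio (Suc j))" and "0 < eps"
  obtains M where "\<And>d. avg_complexity (tensor_eig lam d) (multi_idx d) eps \<le> M"
proof -
  have lim: "(\<lambda>K. 1 - captured_fraction j K) \<longlonglongrightarrow> 0" if "1 \<le> j" for j
    using tendsto_diff[OF tendsto_const captured_fraction_tendsto[OF that], of 1] by simp
  have nonneg: "0 \<le> 1 - captured_fraction j K" if "1 \<le> j" for j K
    using captured_fraction_bounds[OF that] by simp
  have "0 < eps\<^sup>2"
    using \<open>0 < eps\<close> by simp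
  obtain J K where K: "1 \<le> K"
      and deficit: "\<And>d. (\<Sum>j\<in>{1..d}. 1 - captured_fraction j (if j \<le> J then K else 1)) \<le> eps\<^sup>2"
    using uniform_truncation[of tail_ratio "\<lambda>j K. 1 - captured_fraction j K" "eps\<^sup>2",
          OF summable nonneg one_minus_captured_fraction_one_le lim \<open>0 < eps\<^sup>2\<close>] by metis
  have "avg_complexity (tensor_eig lam d) (multi_idx d) eps \<le> K ^ J" for d
  proof -
    interpret nonneg_summable "tensor_eig lam d" "multi_idx d"
      by (rule nonneg_summable_tensor_eig)
    define Kj where "Kj j = (if j \<le> J then K else 1)" for j
    define F where "F = PiE {1..d} (\<lambda>j. {1..Kj j})"
    have "F \<subseteq> multi_idx d"
      unfolding F_def multi_idx_def by (intro PiE_mono) auto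
    moreover have "card F \<le> K ^ J"
      unfolding F_def Kj_def using K by (rule card_truncation_box)
    moreover have "finite F"
      unfolding F_def by (intro finite_PiE) auto
    moreover have "(1 - eps\<^sup>2) * infsum (tensor_eig lam d) (multi_idx d) \<le> sum (tensor_eig lam d) F"
      using deficit[of d] sum_tensor_eig_box_ge[where d = d and K = Kj] infsum_tensor_eig_pos[of d]
      unfolding F_def Kj_def by (smt (verit) mult_right_mono)
    ultimately show ?thesis
      using avg_complexity_le_iff[OF infsum_tensor_eig_pos \<open>0 < eps\<close>] by blast
  qed
  then show thesis
    by (rule that)
qed

end

theorem proposition5:
  fixes lam :: "nat \<Rightarrow> nat \<Rightarrow> real"
  assumes nonneg: "\<And>j k. 1 \<le> j \<Longrightarrow> 1 \<le> k \<Longrightarrow> 0 \<le> lam j k"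
    and noninc: "\<And>j k. 1 \<le> j \<Longrightarrow> 1 \<le> k \<Longrightarrow> lam j (Suc k) \<le> lam j k"
    and trace: "\<And>j. 1 \<le> j \<Longrightarrow> summable (\<lambda>k. lam j (Suc k))"
    and pos: "\<And>j. 1 \<le> j \<Longrightarrow> 0 < lam j 1"
  shows "(\<forall>eps::real. 0 < eps \<and> eps < 1 \<longrightarrow>
            (\<exists>M::nat. \<forall>d\<ge>1. avg_complexity (tensor_eig lam d) (multi_idx d) eps \<le> M))
         \<longleftrightarrow> summable (\<lambda>j. \<Sum>k. lam (Suc j) (k + 2) / lam (Suc j) 1)"
proof -
  interpret factor_eigenvalues lam
    using assms by unfold_locales
  have "(\<lambda>j. \<Sum>k. lam (Suc j) (k + 2) / lam (Suc j) 1) = (\<lambda>j. tail_ratio (Suc j))"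
    using tail_ratio_eq_suminf by simp
  moreover have "summable (\<lambda>j. tail_ratio (Suc j))"
    if bounded: "\<forall>eps::real. 0 < eps \<and> eps < 1 \<longrightarrow>
          (\<exists>M::nat. \<forall>d\<ge>1. avg_complexity (tensor_eig lam d) (multi_idx d) eps \<le> M)"
  proof -
    obtain M :: nat where "\<And>d. 1 \<le> d \<Longrightarrow> avg_complexity (tensor_eig lam d) (multi_idx d) (1/2) \<le> M"
      using bounded[rule_format, of "1/2"] by auto
    then show ?thesis
      by (rule summable_tail_ratio_if_bounded_complexity[rotated 2]) simp_all
  qed
  moreover have "\<exists>M::nat. \<forall>d\<ge>1. avg_complexity (tensor_eig lam d) (multi_idx d) eps \<le> M"
    if "summable (\<lambda>j. tail_ratio (Suc j))" "0 < eps" for eps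
    using bounded_complexity_if_summable_tail_ratio[OF that] by metis
  ultimately show ?thesis
    by auto
qed

end
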